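(* Let $I$ be an open arc in $\partial\mathbb{D}$ and $\lambda\in I$. Let $v$ be a non-negative bounded function on $\partial\mathbb{D}$ which is continuous on $I$, continuously differentiable on $I\setminus\{\lambda\}$, and satisfies $v(\lambda)=0$. Then there exists an analytic function $b$ on $\mathbb{D}$ which extends continuously to $\overline{\mathbb{D}}$ and satisfies $b(\lambda)=0$ and $|b(e^{i\theta})|\ge v(e^{i\theta})$ for all $e^{i\theta}\in\partial\mathbb{D}$. *)

theory Defs
  imports "HOL-Analysis.Analysis"
begin

end

theory Submission
  imports Defs "HOL-Complex_Analysis.Complex_Analysis"
begin

text \<open>Put \<open>\<zeta> = cis t0\<close> and \<open>w(z) = 1 - conj(\<zeta>) z\<close>; on the closed disc \<open>w\<close> takes values in
  the closed right half-plane and vanishes only at \<open>\<zeta>\<close>. For \<open>\<delta> > 0\<close> the quotient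
  \<open>w / (w + \<delta>)\<close> is holomorphic, bounded by 1, vanishes at \<open>\<zeta>\<close>, has non-negative real part, and
  has real part at least 1/4 where \<open>|z - \<zeta>| \<ge> \<delta>\<close>. Continuity of \<open>v\<close> at \<open>\<zeta>\<close> gives radii
  \<open>\<delta>_n\<close> with \<open>v < M/2^n\<close> on the \<open>\<delta>_n\<close>-neighbourhood of \<open>\<zeta>\<close>, where \<open>M\<close> bounds \<open>v\<close>. The series
  \<open>B = \<Sum>_n 8M/2^n \<cdot> w/(w + \<delta>_n)\<close> converges uniformly, and at a boundary point with
  \<open>M/2^(k+1) \<le> v(z) < M/2^k\<close> the term \<open>n = k+1\<close> alone gives \<open>|B(z)| \<ge> Re B(z) \<ge> M/2^k > v(z)\<close>.\<close>

lemma Re_nonneg_add_pos_nonzero: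
  fixes w :: complex
  assumes "Re w \<ge> 0" "e > 0"
  shows "w + of_real e \<noteq> 0"
  using assms by (auto simp: complex_eq_iff)

lemma norm_divide_add_pos_le_1:
  fixes w :: complex
  assumes "Re w \<ge> 0" "e > 0"
  shows "norm (w / (w + of_real e)) \<le> 1"
proof -
  obtain x y where w: "w = Complex x y" by (cases w)
  have "cmod w \<le> cmod (w + of_real e)"
    unfolding w cmod_def using assms w by (auto intro!: real_sqrt_le_mono mult_mono simp: power2_eq_square)
  then show ?thesis
    using Re_nonneg_add_pos_nonzero[OF assms] by (simp add: norm_divide divide_le_eq)
qed

lemma Re_Complex_divide_add_of_real:
  fixes x y e :: real
  shows "Re (Complex x y / (Complex x y + of_real e)) = (x\<^sup>2 + y\<^sup>2 + e * x) / ((x + e)\<^sup>2 + y\<^sup>2)"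
  by (simp add: Re_divide power2_eq_square algebra_simps)

lemma Re_divide_add_pos_nonneg:
  fixes w :: complex
  assumes "Re w \<ge> 0" "e > 0"
  shows "Re (w / (w + of_real e)) \<ge> 0"
proof -
  obtain x y where w: "w = Complex x y" by (cases w)
  show ?thesis
    unfolding w Re_Complex_divide_add_of_real using assms w by (intro divide_nonneg_nonneg) auto
qed

lemma Re_divide_add_pos_ge_quarter:
  fixes w :: complex
  assumes "Re w \<ge> 0" "e > 0" "cmod w \<ge> e"
  shows "Re (w / (w + of_real e)) \<ge> 1/4"
proof -
  obtain x y where w: "w = Complex x y" by (cases w)
  have x: "x \<ge> 0" using assms w by simp
  have den: "(x + e)\<^sup>2 + y\<^sup>2 > 0"
    using x assms by (smt (verit) zero_less_power2 sum_power2_gt_zero_iff)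
  have "e\<^sup>2 \<le> (sqrt (x\<^sup>2 + y\<^sup>2))\<^sup>2"
    using assms unfolding w cmod_def by (intro power_mono) auto
  then have "x\<^sup>2 + y\<^sup>2 \<ge> e\<^sup>2" by simp
  moreover have "e * x \<ge> 0" using x assms by simp
  moreover have "(x + e)\<^sup>2 + y\<^sup>2 = e\<^sup>2 + 2 * (e * x) + x\<^sup>2 + y\<^sup>2"
    by (simp add: power2_eq_square algebra_simps)
  ultimately have "4 * (x\<^sup>2 + y\<^sup>2 + e * x) \<ge> (x + e)\<^sup>2 + y\<^sup>2"
    by (smt (verit) zero_le_power2)
  then show ?thesis
    unfolding w Re_Complex_divide_add_of_real using den by (simp add: le_divide_eq)
qed

lemma Re_one_minus_cnj_mult_nonneg:
  assumes "norm \<zeta> = 1" "z \<in> cball 0 1"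
  shows "Re (1 - cnj \<zeta> * z) \<ge> 0"
proof -
  have "Re (cnj \<zeta> * z) \<le> cmod (cnj \<zeta> * z)" by (rule complex_Re_le_cmod)
  also have "\<dots> \<le> 1" using assms by (simp add: norm_mult)
  finally show ?thesis by simp
qed

lemma norm_one_minus_cnj_mult:
  assumes "norm \<zeta> = 1"
  shows "cmod (1 - cnj \<zeta> * z) = cmod (z - \<zeta>)"
proof -
  have "cnj \<zeta> * \<zeta> = 1"
    using assms by (simp add: complex_norm_square[symmetric] mult.commute)
  then have "1 - cnj \<zeta> * z = cnj \<zeta> * (\<zeta> - z)" by (simp add: algebra_simps)
  then show ?thesis using assms by (simp add: norm_mult norm_minus_commute)
qed

definition peak_term :: "complex \<Rightarrow> real \<Rightarrow> complex \<Rightarrow> complex" where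
  "peak_term \<zeta> e z = (1 - cnj \<zeta> * z) / (1 - cnj \<zeta> * z + of_real e)"

definition peak_series :: "complex \<Rightarrow> (nat \<Rightarrow> real) \<Rightarrow> (nat \<Rightarrow> real) \<Rightarrow> complex \<Rightarrow> complex" where
  "peak_series \<zeta> c d z = (\<Sum>n. of_real (c n) * peak_term \<zeta> (d n) z)"

lemma peak_term_center:
  assumes "norm \<zeta> = 1"
  shows "peak_term \<zeta> e \<zeta> = 0"
  using norm_one_minus_cnj_mult[OF assms, of \<zeta>] by (simp add: peak_term_def)

lemma norm_peak_term_le_1:
  assumes "norm \<zeta> = 1" "z \<in> cball 0 1" "e > 0"
  shows "norm (peak_term \<zeta> e z) \<le> 1"
  unfolding peak_term_def
  by (rule norm_divide_add_pos_le_1[OF Re_one_minus_cnj_mult_nonneg[OF assms(1,2)] assms(3)])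

lemma Re_peak_term_nonneg:
  assumes "norm \<zeta> = 1" "z \<in> cball 0 1" "e > 0"
  shows "Re (peak_term \<zeta> e z) \<ge> 0"
  unfolding peak_term_def
  by (rule Re_divide_add_pos_nonneg[OF Re_one_minus_cnj_mult_nonneg[OF assms(1,2)] assms(3)])

lemma Re_peak_term_ge_quarter:
  assumes "norm \<zeta> = 1" "z \<in> cball 0 1" "e > 0" "cmod (z - \<zeta>) \<ge> e"
  shows "Re (peak_term \<zeta> e z) \<ge> 1/4"
  unfolding peak_term_def using assms(4)
  by (intro Re_divide_add_pos_ge_quarter Re_one_minus_cnj_mult_nonneg assms(1-3))
     (simp add: norm_one_minus_cnj_mult[OF assms(1)])

lemma peak_term_holomorphic_continuous:
  assumes "norm \<zeta> = 1" "e > 0"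
  shows "peak_term \<zeta> e holomorphic_on ball 0 1" "continuous_on (cball 0 1) (peak_term \<zeta> e)"
proof -
  have "1 - cnj \<zeta> * z + of_real e \<noteq> 0" if "z \<in> cball 0 1" for z
    by (rule Re_nonneg_add_pos_nonzero[OF Re_one_minus_cnj_mult_nonneg[OF assms(1) that] assms(2)])
  then show "peak_term \<zeta> e holomorphic_on ball 0 1" "continuous_on (cball 0 1) (peak_term \<zeta> e)"
    unfolding peak_term_def by (auto intro!: holomorphic_intros continuous_intros)
qed

lemma norm_peak_series_term_le:
  assumes "norm \<zeta> = 1" "z \<in> cball 0 1" "c \<ge> 0" "e > 0"
  shows "norm (of_real c * peak_term \<zeta> e z) \<le> c"
  using norm_peak_term_le_1[OF assms(1,2,4)] assms(3) by (simp add: norm_mult mult_left_le)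

lemma peak_series_holomorphic_continuous:
  assumes "norm \<zeta> = 1" "summable c" "\<And>n. c n \<ge> 0" "\<And>n. d n > 0"
  shows "peak_series \<zeta> c d holomorphic_on ball 0 1 \<and> continuous_on (cball 0 1) (peak_series \<zeta> c d)"
proof -
  have "norm (of_real (c n) * peak_term \<zeta> (d n) z) \<le> c n" if "z \<in> cball 0 1" for n z
    using assms that by (intro norm_peak_series_term_le)
  then have "uniform_limit (cball 0 1) (\<lambda>n z. \<Sum>i<n. of_real (c i) * peak_term \<zeta> (d i) z)
               (peak_series \<zeta> c d) sequentially"
    unfolding peak_series_def by (rule Weierstrass_m_test[OF _ assms(2)])
  moreover have "continuous_on (cball 0 1) (\<lambda>z. \<Sum>i<n. of_real (c i) * peak_term \<zeta> (d i) z)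
      \<and> (\<lambda>z. \<Sum>i<n. of_real (c i) * peak_term \<zeta> (d i) z) holomorphic_on ball 0 1" for n
    using peak_term_holomorphic_continuous[OF assms(1,4)]
    by (intro conjI continuous_on_sum holomorphic_on_sum continuous_on_mult holomorphic_on_mult
          continuous_on_const holomorphic_on_const) auto
  then have "\<forall>\<^sub>F n in sequentially.
      continuous_on (cball 0 1) (\<lambda>z. \<Sum>i<n. of_real (c i) * peak_term \<zeta> (d i) z)
      \<and> (\<lambda>z. \<Sum>i<n. of_real (c i) * peak_term \<zeta> (d i) z) holomorphic_on ball 0 1"
    by simp
  ultimately show ?thesis
    by (elim holomorphic_uniform_limit[rotated]) simp_all
qed

lemma peak_series_center:
  assumes "norm \<zeta> = 1"
  shows "peak_series \<zeta> c d \<zeta> = 0"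
  by (simp add: peak_series_def peak_term_center[OF assms])

lemma Re_peak_series_ge_term:
  assumes "norm \<zeta> = 1" "summable c" "\<And>n. c n \<ge> 0" "\<And>n. d n > 0"
    and z: "z \<in> cball 0 1" "cmod (z - \<zeta>) \<ge> d n"
  shows "c n / 4 \<le> Re (peak_series \<zeta> c d z)"
proof -
  let ?f = "\<lambda>n. of_real (c n) * peak_term \<zeta> (d n) z"
  have "norm (?f n) \<le> c n" for n
    using assms z(1) by (intro norm_peak_series_term_le)
  then have summable_f: "summable ?f"
    by (rule summable_comparison_test'[OF assms(2)])
  have Re_series: "Re (peak_series \<zeta> c d z) = (\<Sum>n. Re (?f n))" "summable (\<lambda>n. Re (?f n))"
    unfolding peak_series_def by (rule Re_suminf[OF summable_f], rule summable_Re[OF summable_f])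
  have Re_f: "Re (?f n) = c n * Re (peak_term \<zeta> (d n) z)" for n
    by simp
  have "c n / 4 \<le> Re (?f n)"
    unfolding Re_f using Re_peak_term_ge_quarter[OF assms(1) z(1) assms(4) z(2)] assms(3)[of n]
    by (metis mult_left_mono mult.assoc mult.commute mult_1 divide_inverse inverse_eq_divide)
  also have "\<dots> = (\<Sum>i\<in>{n}. Re (?f i))" by simp
  also have "\<dots> \<le> Re (peak_series \<zeta> c d z)"
    unfolding Re_series(1) using Re_peak_term_nonneg[OF assms(1) z(1) assms(4)] assms(3)
    by (intro sum_le_suminf Re_series(2)) (auto simp: Re_f)
  finally show ?thesis .
qed

lemma continuous_within_sphere_if_isCont_cis:
  fixes v :: "complex \<Rightarrow> 'a :: metric_space"
  assumes "isCont (\<lambda>t. v (cis t)) t0"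
  shows "continuous (at (cis t0) within sphere 0 1) v"
  unfolding continuous_within_eps_delta
proof (intro allI impI)
  fix e :: real assume "e > 0"
  with assms obtain d1 where d1: "d1 > 0" "\<And>t. dist t t0 < d1 \<Longrightarrow> dist (v (cis t)) (v (cis t0)) < e"
    unfolding continuous_at_eps_delta by blast
  have "isCont Arg 1" by (rule continuous_at_Arg) auto
  then obtain d2 where d2: "d2 > 0" "\<And>u. dist u 1 < d2 \<Longrightarrow> dist (Arg u) (Arg 1) < d1"
    using d1(1) unfolding continuous_at_eps_delta by blast
  show "\<exists>d>0. \<forall>z\<in>sphere 0 1. dist z (cis t0) < d \<longrightarrow> dist (v z) (v (cis t0)) < e"
  proof (intro exI[of _ d2] conjI ballI impI d2(1))
    fix z :: complex assume z: "z \<in> sphere 0 1" "dist z (cis t0) < d2"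
    define u where "u = z * cis (-t0)"
    have "u - 1 = (z - cis t0) * cis (-t0)"
      unfolding u_def by (simp add: algebra_simps cis_mult)
    then have "\<bar>Arg u\<bar> < d1"
      using d2(2)[of u] z(2) by (simp add: dist_norm norm_mult)
    have "norm u = 1" using z(1) unfolding u_def by (simp add: norm_mult)
    then have "u \<noteq> 0" by auto
    with \<open>norm u = 1\<close> have "cis (Arg u) = u" by (simp add: cis_Arg sgn_div_norm)
    moreover have "z = u * cis t0" unfolding u_def by (simp add: mult.assoc cis_mult)
    ultimately have "z = cis (t0 + Arg u)" by (metis cis_mult add.commute)
    then show "dist (v z) (v (cis t0)) < e"
      using d1(2)[of "t0 + Arg u"] \<open>\<bar>Arg u\<bar> < d1\<close> by (simp add: dist_real_def)
  qed
qed

lemma geometric_bracket: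
  fixes x M :: real
  assumes "0 < x" "x < M"
  obtains k where "M * (1/2) ^ Suc k \<le> x" "x < M * (1/2) ^ k"
proof -
  obtain n0 where "(1/2::real) ^ n0 < x / M"
    using real_arch_pow_inv[of "x / M" "1/2"] assms by auto
  then have ex: "M * (1/2) ^ n0 \<le> x" using assms by (simp add: field_simps)
  define n where "n = (LEAST n. M * (1/2::real) ^ n \<le> x)"
  have n: "M * (1/2) ^ n \<le> x" unfolding n_def by (rule LeastI[of _ n0], rule ex)
  then obtain k where k: "n = Suc k" using assms by (cases n) auto
  have "\<not> M * (1/2) ^ k \<le> x"
    unfolding n_def by (rule not_less_Least) (simp add: k n_def[symmetric])
  then show thesis using n k that by simp
qed

lemma shrinking_neighbourhoods:
  fixes v :: "complex \<Rightarrow> real"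
  assumes "continuous (at \<zeta> within S) v" "v \<zeta> = 0" "M > 0"
  obtains d where "\<And>n. d n > 0"
    "\<And>n z. z \<in> S \<Longrightarrow> cmod (z - \<zeta>) < d n \<Longrightarrow> v z < M * (1/2) ^ n"
proof -
  have "\<forall>n. \<exists>\<delta>>0. \<forall>z\<in>S. cmod (z - \<zeta>) < \<delta> \<longrightarrow> v z < M * (1/2) ^ n"
  proof
    fix n :: nat
    have "M * (1/2) ^ n > 0" using assms(3) by simp
    then show "\<exists>\<delta>>0. \<forall>z\<in>S. cmod (z - \<zeta>) < \<delta> \<longrightarrow> v z < M * (1/2) ^ n"
      using assms(1,2) unfolding continuous_within_eps_delta
      by (simp add: dist_norm abs_less_iff) blast
  qed
  then obtain d where "\<forall>n. d n > 0 \<and> (\<forall>z\<in>S. cmod (z - \<zeta>) < d n \<longrightarrow> v z < M * (1/2) ^ n)"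
    by (auto dest!: choice)
  with that show thesis by blast
qed

theorem mainTheorem14:
  fixes v :: "complex \<Rightarrow> real" and a b t0 :: real
  assumes arc: "a < b" "b - a < 2 * pi"
    and lam: "t0 \<in> {a<..<b}"
    and nonneg: "\<forall>z\<in>sphere 0 1. v z \<ge> 0"
    and bdd: "bdd_above (v ` sphere 0 1)"
    and cont: "continuous_on ((\<lambda>t. cis t) ` {a<..<b}) v"
    and C1: "(\<lambda>t. v (cis t)) C1_differentiable_on ({a<..<b} - {t0})"
    and vzero: "v (cis t0) = 0"
  shows "\<exists>B :: complex \<Rightarrow> complex. B holomorphic_on ball 0 1
           \<and> continuous_on (cball 0 1) B
           \<and> B (cis t0) = 0
           \<and> (\<forall>z\<in>sphere 0 1. norm (B z) \<ge> v z)"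
proof -
  obtain M0 where M0: "\<And>z. z \<in> sphere 0 1 \<Longrightarrow> v z \<le> M0"
    using bdd unfolding bdd_above_def by blast
  obtain M where M: "M > 0" "\<And>z. z \<in> sphere 0 1 \<Longrightarrow> v z < M"
  proof
    show "max M0 0 + 1 > 0" by simp
    show "v z < max M0 0 + 1" if "z \<in> sphere 0 1" for z
      using M0[OF that] by simp
  qed
  have "continuous_on {a<..<b} (\<lambda>t. v (cis t))"
    by (rule continuous_on_compose2[OF cont]) (auto intro: continuous_intros)
  then have "isCont (\<lambda>t. v (cis t)) t0"
    using lam by (simp add: continuous_on_eq_continuous_at)
  then have cont_at: "continuous (at (cis t0) within sphere 0 1) v"
    by (rule continuous_within_sphere_if_isCont_cis)
  obtain d where d: "\<And>n. d n > 0"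
      "\<And>n z. z \<in> sphere 0 1 \<Longrightarrow> cmod (z - cis t0) < d n \<Longrightarrow> v z < M * (1/2) ^ n"
    by (rule shrinking_neighbourhoods[OF cont_at vzero M(1)]) blast
  define c where "c n = 8 * M * (1/2::real) ^ n" for n
  have c: "summable c" "\<And>n. c n \<ge> 0"
    using M(1) unfolding c_def by (auto intro!: summable_mult summable_geometric)
  have "norm (cis t0) = 1" by simp
  note peak = this c d(1)
  have "v z \<le> norm (peak_series (cis t0) c d z)" if z: "z \<in> sphere 0 1" for z
  proof (cases "v z > 0")
    case True
    then obtain k where k: "M * (1/2) ^ Suc k \<le> v z" "v z < M * (1/2) ^ k"
      using M(2)[OF z] by (rule geometric_bracket)
    then have "d (Suc k) \<le> cmod (z - cis t0)"
      using d(2)[OF z, of "Suc k"] by linarith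
    then have "c (Suc k) / 4 \<le> Re (peak_series (cis t0) c d z)"
      using z by (intro Re_peak_series_ge_term[OF peak]) auto
    moreover have "c (Suc k) / 4 = M * (1/2) ^ k" by (simp add: c_def)
    ultimately show ?thesis using k(2) complex_Re_le_cmod[of "peak_series (cis t0) c d z"] by linarith
  qed (use norm_ge_zero[of "peak_series (cis t0) c d z"] in linarith)
  then show ?thesis
    using peak_series_holomorphic_continuous[OF peak] peak_series_center[OF peak(1)]
    by (intro exI[of _ "peak_series (cis t0) c d"]) simp
qed

end
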